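(* Let $N\ge 1$, $Z=\{1,\dots,N\}$, and let $W=(w_{ij})\in\mathbb R^{N\times N}$ be a symmetric weight matrix with nonnegative entries and positive degrees $d_i=\sum_{j\in Z}w_{ij}$; put $D=\mathrm{diag}(d_i)$ and, for some $p\in\mathbb R$, $L=D^{-p}(D-W)D^{-p}$. For $\tau^2,\alpha>0$ let $C_\tau=\tau^{2\alpha}(L+\tau^2 I)^{-\alpha}=(c_{ij})$, with columns $\mathbf c_j=C_\tau\mathbf e_j$, where $\mathbf e_j$ is the $j$-th standard basis vector of $\mathbb R^N$. Let $Z'\subseteq Z$ and $y:Z'\to\{-1,+1\}$. Let $\psi$ be a probability density on $\mathbb R$ that is continuously differentiable, symmetric, strictly log-concave and has full support on $\mathbb R$, with CDF $\Psi$. Define $$\mathsf J(\mathbf u)=\tfrac12\langle \mathbf u,C_\tau^{-1}\mathbf u\rangle-\sum_{j\in Z'}\log\Psi(u_jy(j)),\qquad \mathbf u\in\mathbb R^N,$$ and $F_j(s)=\dfrac{y(j)\psi(sy(j))}{\Psi(sy(j))}$ for $j\in Z'$. Then: (i) $\mathsf J$ has a unique minimizer $\mathbf u^\ast\in\mathbb R^N$; (ii) $\mathbf u^\ast$ satisfies $C_\tau^{-1}\mathbf u^\ast=\sum_{j\in Z'}F_j(u^\ast_j)\mathbf e_j$; (iii) $\mathbf u^\ast=\sum_{j\in Z'}\breve a_j\mathbf c_j$ for some coefficients $\breve a_j\in\mathbb R$; (iv) a vector of the form $\mathbf u^\ast=\sum_{j\in Z'}\breve a_j\mathbf c_j$ solves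 the equation in (ii) if and only if the coefficients satisfy $\breve a_j=F_j\big(\sum_{k\in Z'}\breve a_kc_{jk}\big)$ for all $j\in Z'$.
   Context: $\langle\cdot,\cdot\rangle$ is the Euclidean inner product on $\mathbb R^N$. *)

theory Defs
  imports "HOL-Analysis.Analysis"
begin

definition diagm :: "('n::finite \<Rightarrow> real) \<Rightarrow> real^'n^'n" where
  "diagm f = (\<chi> i j. if i = j then f i else 0)"

text \<open>Used for symmetric positive definite A, where this is well defined.\<close>
definition mat_rpow :: "real^'n^'n \<Rightarrow> real \<Rightarrow> real^'n^'n" where
  "mat_rpow A s = (SOME B. \<exists>Q lam. orthogonal_matrix Q \<and>
      A = Q ** diagm lam ** transpose Q \<and>
      B = Q ** diagm (\<lambda>i. lam i powr s) ** transpose Q)"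

definition strictly_concave :: "(real \<Rightarrow> real) \<Rightarrow> bool" where
  "strictly_concave f \<longleftrightarrow> (\<forall>x y t. x \<noteq> y \<and> 0 < t \<and> t < 1 \<longrightarrow>
      (1 - t) * f x + t * f y < f ((1 - t) * x + t * y))"

definition cdf_of :: "(real \<Rightarrow> real) \<Rightarrow> real \<Rightarrow> real" where
  "cdf_of \<psi> x = integral {..x} \<psi>"

end

theory Submission
  imports Defs
begin

text \<open>
  The Laplacian is positive semidefinite, since \<open>\<langle>z, (D - W) z\<rangle> = \<Sum>\<^sub>i\<^sub>j w\<^sub>i\<^sub>j (z\<^sub>i - z\<^sub>j)\<^sup>2 / 2\<close>,
  so \<open>L + \<tau>\<^sup>2 I\<close> is symmetric with spectrum in \<open>[\<tau>\<^sup>2, \<infinity>)\<close>. Diagonalising it orthogonally,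
  \<open>C\<^sub>\<tau> = Q diag(\<mu>) Q\<^sup>T\<close> with \<open>\<mu> > 0\<close>, so \<open>C\<^sub>\<tau>\<^sup>-\<^sup>1\<close> is symmetric and coercive.
  Log-concavity of \<open>\<psi>\<close> makes \<open>\<psi>/\<Psi>\<close> decreasing, so \<open>-log \<Psi>\<close> is convex, and it is nonnegative.
  Hence \<open>J\<close> is continuous, coercive and strictly convex: it has a unique minimiser, at which
  its gradient \<open>C\<^sub>\<tau>\<^sup>-\<^sup>1u - \<Sum>\<^sub>j F\<^sub>j(u\<^sub>j) e\<^sub>j\<close> vanishes, which is (ii). Applying \<open>C\<^sub>\<tau>\<close> gives (iii),
  and (iv) is (ii) rewritten in the coordinates \<open>a\<close>, using \<open>u\<^sub>j = \<Sum>\<^sub>k a\<^sub>k c\<^sub>j\<^sub>k\<close>.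
\<close>

declare transpose_matrix_vector [simp del] \<comment> \<open>keep \<open>transpose Q *v x\<close> as normal form\<close>

section \<open>Diagonal matrices and the spectral theorem\<close>

lemma diagm_mult_vec_nth [simp]: "(diagm f *v x) $ i = f i * x $ i"
  by (simp add: diagm_def matrix_vector_mult_def if_distrib[of "\<lambda>a. a * _"] cong: if_cong)

lemma transpose_diagm [simp]: "transpose (diagm f) = diagm f"
  by (simp add: transpose_def diagm_def vec_eq_iff)

lemma diagm_mult_diagm: "diagm f ** diagm g = diagm (\<lambda>i. f i * g i)"
  by (simp add: vec_eq_iff matrix_vector_mul_assoc[symmetric] diagm_def matrix_matrix_mult_def
      if_distrib[of "\<lambda>x. x * _"] cong: if_cong)

lemma diagm_1: "diagm (\<lambda>i. 1) = mat 1"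
  by (simp add: diagm_def mat_def vec_eq_iff)

lemma scaleR_diagm: "c *\<^sub>R diagm f = diagm (\<lambda>i. c * f i)"
  by (simp add: diagm_def vec_eq_iff)

lemma scaleR_conjugated_diagm: "c *\<^sub>R (P ** diagm f ** R) = P ** diagm (\<lambda>i. c * f i) ** R"
proof -
  have "c *\<^sub>R (P ** diagm f ** R) = P ** (c *\<^sub>R diagm f) ** R"
    by (metis matrix_scalar_ac scalar_matrix_assoc)
  then show ?thesis by (simp add: scaleR_diagm)
qed

lemma transpose_add: "transpose (A + B) = transpose A + transpose (B :: 'a::semiring_1^'n^'m)"
  by (simp add: transpose_def vec_eq_iff)

lemma transpose_diff: "transpose (A - B) = transpose A - transpose (B :: 'a::ring_1^'n^'m)"
  by (simp add: transpose_def vec_eq_iff)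

lemma inner_matrix_vector_mult_transpose:
  fixes Q :: "real^'n^'m"
  shows "x \<bullet> (Q *v y) = (transpose Q *v x) \<bullet> y"
  by (simp add: dot_lmul_matrix transpose_matrix_vector)

lemma symmetric_matrix_inner_commute:
  fixes A :: "real^'n^'n"
  assumes "transpose A = A"
  shows "x \<bullet> (A *v y) = y \<bullet> (A *v x)"
  by (metis assms inner_commute inner_matrix_vector_mult_transpose)

lemma continuous_on_quadratic_form:
  fixes A :: "real^'n^'n"
  shows "continuous_on S (\<lambda>x. x \<bullet> (A *v x))"
  by (intro continuous_intros linear_continuous_on matrix_vector_mul_bounded_linear)

lemma symmetric_matrix_rayleigh_maximizer_eigenvector:
  fixes A :: "real^'n^'n"
  assumes sym: "transpose A = A" and S: "subspace S" and inv: "\<And>x. x \<in> S \<Longrightarrow> A *v x \<in> S"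
    and v: "v \<in> S" "v \<bullet> v = 1"
    and bound: "\<And>x. x \<in> S \<Longrightarrow> x \<bullet> (A *v x) \<le> (v \<bullet> (A *v v)) * (x \<bullet> x)"
  shows "A *v v = (v \<bullet> (A *v v)) *\<^sub>R v"
proof -
  define l where "l = v \<bullet> (A *v v)"
  define r where "r = A *v v - l *\<^sub>R v"
  have r: "r \<in> S" "r \<bullet> v = 0"
    using S inv v
    by (simp_all add: r_def l_def subspace_diff subspace_scale inner_diff_left inner_commute[of "A *v v" v])
  have Arv: "r \<bullet> (A *v v) = r \<bullet> r"
    using r(2) by (simp add: r_def inner_diff_right inner_commute)
  \<comment> \<open>Perturbing v along r within S gives f t \<le> 0 = f 0, so f' 0 = 2 * (r \<bullet> r) vanishes.\<close>
  define f where "f t = 2 * t * (r \<bullet> r) + t^2 * (r \<bullet> (A *v r) - l * (r \<bullet> r))" for t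
  have "f t \<le> 0" for t
  proof -
    have "v + t *\<^sub>R r \<in> S" using v r S by (simp add: subspace_add subspace_scale)
    then have "(v + t *\<^sub>R r) \<bullet> (A *v (v + t *\<^sub>R r)) \<le> l * ((v + t *\<^sub>R r) \<bullet> (v + t *\<^sub>R r))"
      unfolding l_def by (rule bound)
    moreover have "r \<bullet> (A *v v) = v \<bullet> (A *v r)" by (rule symmetric_matrix_inner_commute[OF sym])
    ultimately show ?thesis
      using v(2) r(2)
      by (simp add: f_def l_def Arv matrix_vector_right_distrib matrix_vector_mult_scaleR
          inner_add_left inner_add_right inner_commute[of r v] power2_eq_square algebra_simps)
  qed
  moreover have "(f has_real_derivative 2 * (r \<bullet> r)) (at 0)"
    unfolding f_def by (auto intro!: derivative_eq_intros)
  ultimately have "2 * (r \<bullet> r) = 0"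
    by (intro DERIV_local_max[of f _ 0 1]) (auto simp: f_def)
  then show ?thesis by (simp add: r_def l_def)
qed

lemma symmetric_matrix_invariant_subspace_has_eigenvector:
  fixes A :: "real^'n^'n"
  assumes sym: "transpose A = A" and S: "subspace S" "S \<noteq> {0}"
    and inv: "\<And>x. x \<in> S \<Longrightarrow> A *v x \<in> S"
  obtains v l where "v \<in> S" "norm v = 1" "A *v v = l *\<^sub>R v"
proof -
  obtain x0 where x0: "x0 \<in> S" "x0 \<noteq> 0" using S subspace_0 by blast
  let ?T = "S \<inter> sphere 0 1"
  have "x0 /\<^sub>R norm x0 \<in> ?T" using x0 S by (simp add: subspace_scale)
  then have "?T \<noteq> {}" by blast
  moreover have "compact ?T" using S by (intro closed_Int_compact closed_subspace compact_sphere)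
  ultimately obtain v where v: "v \<in> ?T" and vmax: "\<forall>x\<in>?T. x \<bullet> (A *v x) \<le> v \<bullet> (A *v v)"
    using continuous_attains_sup[OF _ _ continuous_on_quadratic_form] by blast
  have "x \<bullet> (A *v x) \<le> (v \<bullet> (A *v v)) * (x \<bullet> x)" if "x \<in> S" for x
  proof (cases "x = 0")
    case False
    have "x /\<^sub>R norm x \<in> ?T" using that False S by (simp add: subspace_scale)
    then have "(x /\<^sub>R norm x) \<bullet> (A *v (x /\<^sub>R norm x)) \<le> v \<bullet> (A *v v)" using vmax by blast
    moreover have "(x /\<^sub>R norm x) \<bullet> (A *v (x /\<^sub>R norm x)) = (x \<bullet> (A *v x)) / (norm x)^2"
      by (simp add: matrix_vector_mult_scaleR power2_eq_square field_simps)
    ultimately show ?thesis using False by (simp add: divide_le_eq power2_norm_eq_inner mult.commute)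
  qed simp
  moreover have "v \<in> S" "v \<bullet> v = 1" using v by (auto simp: norm_eq_1)
  ultimately have "A *v v = (v \<bullet> (A *v v)) *\<^sub>R v"
    using symmetric_matrix_rayleigh_maximizer_eigenvector[OF sym S(1) inv] by blast
  with \<open>v \<in> S\<close> \<open>v \<bullet> v = 1\<close> that show ?thesis by (auto simp: norm_eq_1)
qed

lemma symmetric_matrix_invariant_subspace_orthonormal_eigenbasis:
  fixes A :: "real^'n^'n"
  assumes sym: "transpose A = A"
  shows "subspace S \<Longrightarrow> (\<forall>x\<in>S. A *v x \<in> S) \<Longrightarrow>
    \<exists>B\<subseteq>S. pairwise orthogonal B \<and> (\<forall>b\<in>B. norm b = 1 \<and> (\<exists>l. A *v b = l *\<^sub>R b)) \<and> span B = S"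
proof (induction "dim S" arbitrary: S rule: less_induct)
  case less
  show ?case
  proof (cases "S = {0}")
    case True
    then show ?thesis by (intro exI[of _ "{}"]) auto
  next
    case False
    with less.prems obtain v l where v: "v \<in> S" "norm v = 1" "A *v v = l *\<^sub>R v"
      using symmetric_matrix_invariant_subspace_has_eigenvector[OF sym] by metis
    define S' where "S' = {x\<in>S. x \<bullet> v = 0}"
    have "subspace S'"
      using less.prems(1) by (auto simp: S'_def subspace_def inner_add_left)
    moreover have "\<forall>x\<in>S'. A *v x \<in> S'"
    proof
      fix x assume "x \<in> S'"
      moreover have "(A *v x) \<bullet> v = x \<bullet> (A *v v)"
        using symmetric_matrix_inner_commute[OF sym, of v x] by (simp add: inner_commute)
      ultimately show "A *v x \<in> S'" using less.prems(2) v(3) by (simp add: S'_def)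
    qed
    moreover have "dim S' < dim S"
    proof (rule dim_psubset)
      have "v \<notin> S'" using v(2) by (auto simp: S'_def norm_eq_1)
      moreover have "S' \<subseteq> S" by (auto simp: S'_def)
      ultimately show "span S' \<subset> span S"
        using v(1) \<open>subspace S'\<close> less.prems(1) by (metis psubsetI span_eq_iff)
    qed
    ultimately obtain B' where B': "B' \<subseteq> S'" "pairwise orthogonal B'"
      "\<forall>b\<in>B'. norm b = 1 \<and> (\<exists>l. A *v b = l *\<^sub>R b)" "span B' = S'"
      using less.hyps by blast
    show ?thesis
    proof (intro exI[of _ "insert v B'"] conjI)
      show "insert v B' \<subseteq> S" using v(1) B'(1) by (auto simp: S'_def)
      have "orthogonal v b" if "b \<in> B'" for b
        using B'(1) that by (auto simp: S'_def orthogonal_def inner_commute)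
      then show "pairwise orthogonal (insert v B')"
        using B'(2) by (auto simp: pairwise_insert orthogonal_commute)
      show "\<forall>b\<in>insert v B'. norm b = 1 \<and> (\<exists>l. A *v b = l *\<^sub>R b)"
        using B'(3) v by auto
      show "span (insert v B') = S"
      proof
        show "span (insert v B') \<subseteq> S"
          using \<open>insert v B' \<subseteq> S\<close> less.prems(1) by (simp add: span_minimal)
        show "S \<subseteq> span (insert v B')"
        proof
          fix x assume "x \<in> S"
          then have "x - (x \<bullet> v) *\<^sub>R v \<in> S'"
            using v less.prems(1) by (simp add: S'_def subspace_diff subspace_scale inner_diff_left norm_eq_1)
          then have "x - (x \<bullet> v) *\<^sub>R v \<in> span (insert v B')"
            using B'(4) span_mono[of B' "insert v B'"] by auto
          then show "x \<in> span (insert v B')"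
            by (metis diff_add_cancel insertI1 span_add span_base span_scale)
        qed
      qed
    qed
  qed
qed

lemma symmetric_matrix_orthogonal_diagonalization:
  fixes A :: "real^'n^'n"
  assumes sym: "transpose A = A"
  obtains Q lam where "orthogonal_matrix Q" "A = Q ** diagm lam ** transpose Q"
proof -
  obtain B where B: "pairwise orthogonal B" "\<forall>b\<in>B. norm b = 1 \<and> (\<exists>l. A *v b = l *\<^sub>R b)"
      "span B = UNIV"
    using symmetric_matrix_invariant_subspace_orthonormal_eigenbasis[OF sym, of UNIV] by auto
  have "independent B"
    using B(1,2) pairwise_orthogonal_independent by fastforce
  then have "card B = CARD('n)" "finite B"
    using basis_card_eq_dim[of B UNIV] B(3) finiteI_independent by auto
  then obtain g where g: "bij_betw g (UNIV :: 'n set) B"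
    by (metis finite_same_card_bij finite_class.finite_UNIV)
  then have gB: "g i \<in> B" and g_inj: "i \<noteq> j \<Longrightarrow> g i \<noteq> g j" for i j
    by (auto simp: bij_betw_def inj_on_def)
  have "\<forall>i. \<exists>l. A *v g i = l *\<^sub>R g i" using B(2) gB by blast
  then obtain lam where lam: "\<forall>i. A *v g i = lam i *\<^sub>R g i" by metis
  define Q where "Q = (\<chi> r i. g i $ r)"
  have col: "column i Q = g i" for i by (simp add: Q_def column_def vec_eq_iff)
  have orthQ: "orthogonal_matrix Q"
    unfolding orthogonal_matrix_orthonormal_columns col
    using B gB g_inj by (auto simp: pairwise_def)
  have "A ** Q = Q ** diagm lam"
    using lam by (simp add: vec_eq_iff Q_def diagm_def matrix_matrix_mult_def
        matrix_vector_mult_def if_distrib[of "\<lambda>a. _ * a"] mult.commute cong: if_cong)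
  then have "A ** (Q ** transpose Q) = Q ** diagm lam ** transpose Q"
    by (metis matrix_mul_assoc)
  with orthQ show ?thesis
    using that by (simp add: orthogonal_matrix_def)
qed

lemma matrix_inv_eqI:
  fixes A B :: "'a::field^'n^'n"
  assumes "A ** B = mat 1"
  shows "matrix_inv A = B"
proof -
  have "A ** matrix_inv A = mat 1 \<and> matrix_inv A ** A = mat 1"
    unfolding matrix_inv_def
    by (rule someI[where x = B]) (simp add: assms matrix_left_right_inverse1)
  then have inv: "matrix_inv A ** A = mat 1" ..
  have "matrix_inv A = matrix_inv A ** (A ** B)" using assms by simp
  also have "\<dots> = B" using inv by (simp add: matrix_mul_assoc)
  finally show ?thesis .
qed

lemma orthogonal_matrix_transpose_inner:
  fixes Q :: "real^'n^'n"
  assumes "orthogonal_matrix Q"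
  shows "(transpose Q *v x) \<bullet> (transpose Q *v y) = x \<bullet> y"
proof -
  have "(transpose Q *v x) \<bullet> (transpose Q *v y) = x \<bullet> (Q *v (transpose Q *v y))"
    by (rule inner_matrix_vector_mult_transpose[symmetric])
  also have "Q *v (transpose Q *v y) = y"
    using assms by (simp add: matrix_vector_mul_assoc orthogonal_matrix_def)
  finally show ?thesis .
qed

lemma inner_conjugated_diagm:
  fixes Q :: "real^'n^'n"
  shows "x \<bullet> ((Q ** diagm f ** transpose Q) *v y)
     = (\<Sum>i\<in>UNIV. f i * (transpose Q *v x) $ i * (transpose Q *v y) $ i)"
proof -
  have "x \<bullet> ((Q ** diagm f ** transpose Q) *v y) = (transpose Q *v x) \<bullet> (diagm f *v (transpose Q *v y))"
    by (simp add: matrix_vector_mul_assoc[symmetric] inner_matrix_vector_mult_transpose)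
  then show ?thesis by (simp add: inner_vec_def algebra_simps)
qed

lemma orthogonal_diagonalization_quadratic_ge_iff:
  fixes Q :: "real^'n^'n"
  assumes "orthogonal_matrix Q"
  shows "(\<forall>x. m * (x \<bullet> x) \<le> x \<bullet> ((Q ** diagm f ** transpose Q) *v x)) \<longleftrightarrow> (\<forall>i. m \<le> f i)"
proof
  assume ge: "\<forall>x. m * (x \<bullet> x) \<le> x \<bullet> ((Q ** diagm f ** transpose Q) *v x)"
  show "\<forall>i. m \<le> f i"
  proof
    fix i
    have QtQ: "transpose Q *v (Q *v axis i 1) = axis i 1"
      using assms by (simp add: matrix_vector_mul_assoc orthogonal_matrix_def)
    have "m = m * ((Q *v axis i 1) \<bullet> (Q *v axis i 1))"
      using orthogonal_matrix_transpose_inner[OF assms, of "Q *v axis i 1" "Q *v axis i 1"]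
      by (simp add: QtQ inner_axis_axis)
    also have "\<dots> \<le> (\<Sum>k\<in>UNIV. f k * axis i 1 $ k * axis i 1 $ k)"
      using ge[rule_format, of "Q *v axis i 1"] by (simp only: inner_conjugated_diagm QtQ)
    also have "\<dots> = f i"
      by (simp add: axis_def if_distrib[of "\<lambda>a. _ * a"] cong: if_cong)
    finally show "m \<le> f i" .
  qed
next
  assume ge: "\<forall>i. m \<le> f i"
  show "\<forall>x. m * (x \<bullet> x) \<le> x \<bullet> ((Q ** diagm f ** transpose Q) *v x)"
  proof
    fix x
    have "m * (x \<bullet> x) = m * ((transpose Q *v x) \<bullet> (transpose Q *v x))"
      by (simp only: orthogonal_matrix_transpose_inner[OF assms])
    also have "\<dots> = (\<Sum>i\<in>UNIV. m * (transpose Q *v x) $ i * (transpose Q *v x) $ i)"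
      by (simp add: inner_vec_def sum_distrib_left mult.assoc)
    also have "\<dots> \<le> (\<Sum>i\<in>UNIV. f i * (transpose Q *v x) $ i * (transpose Q *v x) $ i)"
      using ge by (intro sum_mono) (simp add: mult.assoc mult_right_mono)
    finally show "m * (x \<bullet> x) \<le> x \<bullet> ((Q ** diagm f ** transpose Q) *v x)"
      by (simp only: inner_conjugated_diagm)
  qed
qed

lemma orthogonal_diagonalization_mult:
  fixes Q :: "real^'n^'n"
  assumes "orthogonal_matrix Q"
  shows "(Q ** diagm f ** transpose Q) ** (Q ** diagm g ** transpose Q) = Q ** diagm (\<lambda>i. f i * g i) ** transpose Q"
proof -
  have "(Q ** diagm f ** transpose Q) ** (Q ** diagm g ** transpose Q)
      = Q ** diagm f ** (transpose Q ** Q) ** diagm g ** transpose Q"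
    by (simp add: matrix_mul_assoc)
  also have "\<dots> = Q ** (diagm f ** diagm g) ** transpose Q"
    using assms by (simp add: orthogonal_matrix_def matrix_mul_assoc)
  finally show ?thesis by (simp only: diagm_mult_diagm)
qed

lemma matrix_inv_orthogonal_diagonalization:
  fixes Q :: "real^'n^'n"
  assumes "orthogonal_matrix Q" "\<forall>i. f i \<noteq> 0"
  shows "matrix_inv (Q ** diagm f ** transpose Q) = Q ** diagm (\<lambda>i. inverse (f i)) ** transpose Q"
  using assms
  by (intro matrix_inv_eqI) (simp add: orthogonal_diagonalization_mult diagm_1 orthogonal_matrix_def)

lemma mat_rpow_symmetric:
  fixes A :: "real^'n^'n"
  assumes "transpose A = A"
  obtains Q lam where "orthogonal_matrix Q" "A = Q ** diagm lam ** transpose Q"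
    "mat_rpow A s = Q ** diagm (\<lambda>i. lam i powr s) ** transpose Q"
proof -
  obtain Q lam where "orthogonal_matrix Q" "A = Q ** diagm lam ** transpose Q"
    using symmetric_matrix_orthogonal_diagonalization[OF assms] .
  then have "\<exists>Q lam. orthogonal_matrix Q \<and> A = Q ** diagm lam ** transpose Q \<and>
      mat_rpow A s = Q ** diagm (\<lambda>i. lam i powr s) ** transpose Q"
    unfolding mat_rpow_def by (intro someI_ex[where P = "\<lambda>B. \<exists>Q lam. orthogonal_matrix Q \<and>
      A = Q ** diagm lam ** transpose Q \<and> B = Q ** diagm (\<lambda>i. lam i powr s) ** transpose Q"]) blast
  with that show ?thesis by blast
qed

lemma matrix_inv_positive_orthogonal_diagonalization:
  fixes Q :: "real^'n^'n"
  assumes Q: "orthogonal_matrix Q" and mu: "\<forall>i. 0 < mu i"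
  defines "C \<equiv> Q ** diagm mu ** transpose Q"
  shows "C ** matrix_inv C = mat 1" and "matrix_inv C ** C = mat 1"
    and "transpose (matrix_inv C) = matrix_inv C"
    and "\<exists>m>0. \<forall>x. m * (x \<bullet> x) \<le> x \<bullet> (matrix_inv C *v x)"
proof -
  have mu_nz: "mu i \<noteq> 0" for i using mu by (metis less_irrefl)
  have Ci: "matrix_inv C = Q ** diagm (\<lambda>i. inverse (mu i)) ** transpose Q"
    unfolding C_def using mu_nz by (intro matrix_inv_orthogonal_diagonalization[OF Q]) simp
  show "C ** matrix_inv C = mat 1" and "matrix_inv C ** C = mat 1"
    unfolding Ci unfolding C_def
    using Q by (simp_all add: orthogonal_diagonalization_mult mu_nz diagm_1 orthogonal_matrix_def)
  show "transpose (matrix_inv C) = matrix_inv C" by (simp add: Ci matrix_transpose_mul matrix_mul_assoc)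
  define m where "m = Min (range (\<lambda>i. inverse (mu i)))"
  have "\<forall>i. m \<le> inverse (mu i)" by (simp add: m_def)
  then have "\<forall>x. m * (x \<bullet> x) \<le> x \<bullet> (matrix_inv C *v x)"
    unfolding Ci orthogonal_diagonalization_quadratic_ge_iff[OF Q] .
  moreover have "m > 0" using mu by (simp add: m_def)
  ultimately show "\<exists>m>0. \<forall>x. m * (x \<bullet> x) \<le> x \<bullet> (matrix_inv C *v x)" by blast
qed

section \<open>Graph Laplacians\<close>

lemma graph_laplacian_quadratic_nonneg:
  fixes W :: "real^'n^'n"
  assumes sym: "transpose W = W" and nonneg: "\<forall>i j. W $ i $ j \<ge> 0"
  shows "z \<bullet> ((diagm (\<lambda>i. \<Sum>j\<in>UNIV. W $ i $ j) - W) *v z) \<ge> 0"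
proof -
  have Wsym: "W $ j $ i = W $ i $ j" for i j
    using sym by (metis transpose_def vec_lambda_beta)
  have deg: "z \<bullet> (diagm (\<lambda>i. \<Sum>j\<in>UNIV. W $ i $ j) *v z) = (\<Sum>i\<in>UNIV. \<Sum>j\<in>UNIV. W $ i $ j * z $ i * z $ i)"
    by (simp add: inner_vec_def sum_distrib_left sum_distrib_right mult.commute mult.left_commute)
  have adj: "z \<bullet> (W *v z) = (\<Sum>i\<in>UNIV. \<Sum>j\<in>UNIV. W $ i $ j * z $ i * z $ j)"
    by (simp add: inner_vec_def matrix_vector_mult_def sum_distrib_left algebra_simps)
  have swap: "(\<Sum>i\<in>UNIV. \<Sum>j\<in>UNIV. W $ i $ j * z $ j * z $ j) = (\<Sum>i\<in>UNIV. \<Sum>j\<in>UNIV. W $ i $ j * z $ i * z $ i)"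
    by (subst sum.swap) (simp add: Wsym)
  have "0 \<le> (\<Sum>i\<in>UNIV. \<Sum>j\<in>UNIV. W $ i $ j * (z $ i - z $ j)^2)"
    using nonneg by (intro sum_nonneg) auto
  also have "\<dots> = (\<Sum>i\<in>UNIV. \<Sum>j\<in>UNIV. W $ i $ j * z $ i * z $ i)
      - 2 * (\<Sum>i\<in>UNIV. \<Sum>j\<in>UNIV. W $ i $ j * z $ i * z $ j)
      + (\<Sum>i\<in>UNIV. \<Sum>j\<in>UNIV. W $ i $ j * z $ j * z $ j)"
    by (simp add: power2_eq_square algebra_simps sum.distrib sum_subtractf sum_distrib_left)
  also have "\<dots> = 2 * (z \<bullet> ((diagm (\<lambda>i. \<Sum>j\<in>UNIV. W $ i $ j) - W) *v z))"
    by (simp add: swap deg adj matrix_vector_mult_diff_rdistrib inner_diff_right)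
  finally show ?thesis by simp
qed

lemma shifted_graph_laplacian_symmetric_coercive:
  fixes W :: "real^'n^'n" and f :: "'n \<Rightarrow> real" and t :: real
  assumes sym: "transpose W = W" and nonneg: "\<forall>i j. W $ i $ j \<ge> 0"
  defines "M \<equiv> diagm f ** (diagm (\<lambda>i. \<Sum>j\<in>UNIV. W $ i $ j) - W) ** diagm f + t *\<^sub>R mat 1"
  shows "transpose M = M" and "t * (x \<bullet> x) \<le> x \<bullet> (M *v x)"
proof -
  show "transpose M = M"
    by (simp add: M_def transpose_add transpose_diff transpose_scalar matrix_transpose_mul sym matrix_mul_assoc)
  have "x \<bullet> ((diagm f ** (diagm (\<lambda>i. \<Sum>j\<in>UNIV. W $ i $ j) - W) ** diagm f) *v x)
      = (diagm f *v x) \<bullet> ((diagm (\<lambda>i. \<Sum>j\<in>UNIV. W $ i $ j) - W) *v (diagm f *v x))"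
    by (simp add: matrix_vector_mul_assoc[symmetric] inner_matrix_vector_mult_transpose[of x "diagm f"])
  also have "\<dots> \<ge> 0" by (rule graph_laplacian_quadratic_nonneg[OF sym nonneg])
  finally show "t * (x \<bullet> x) \<le> x \<bullet> (M *v x)"
    by (simp add: M_def matrix_vector_mult_add_rdistrib inner_add_right scaleR_matrix_vector_assoc[symmetric])
qed

lemma scaled_mat_rpow_shifted_graph_laplacian:
  fixes W :: "real^'n^'n" and f :: "'n \<Rightarrow> real" and t \<alpha> :: real
  assumes sym: "transpose W = W" and nonneg: "\<forall>i j. W $ i $ j \<ge> 0" and "t > 0"
  obtains Q mu where "orthogonal_matrix Q" "\<forall>i. 0 < mu i"
    "t powr \<alpha> *\<^sub>R mat_rpow (diagm f ** (diagm (\<lambda>i. \<Sum>j\<in>UNIV. W $ i $ j) - W) ** diagm f + t *\<^sub>R mat 1) (- \<alpha>)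
      = Q ** diagm mu ** transpose Q"
proof -
  define A where "A = diagm f ** (diagm (\<lambda>i. \<Sum>j\<in>UNIV. W $ i $ j) - W) ** diagm f + t *\<^sub>R mat 1"
  have A_sym: "transpose A = A" and A_coercive: "\<forall>x. t * (x \<bullet> x) \<le> x \<bullet> (A *v x)"
    using shifted_graph_laplacian_symmetric_coercive[OF sym nonneg] by (simp_all add: A_def)
  obtain Q lam where Q: "orthogonal_matrix Q" "A = Q ** diagm lam ** transpose Q"
    "mat_rpow A (- \<alpha>) = Q ** diagm (\<lambda>i. lam i powr (- \<alpha>)) ** transpose Q"
    using mat_rpow_symmetric[OF A_sym] .
  have "\<forall>i. t \<le> lam i"
    using A_coercive unfolding Q(2) orthogonal_diagonalization_quadratic_ge_iff[OF Q(1)] .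
  then have "0 < lam i" for i using \<open>t > 0\<close> by (meson less_le_trans)
  then have "\<forall>i. 0 < t powr \<alpha> * lam i powr (- \<alpha>)"
    using \<open>t > 0\<close> by (metis powr_gt_zero mult_pos_pos less_irrefl)
  moreover have "t powr \<alpha> *\<^sub>R mat_rpow A (- \<alpha>) = Q ** diagm (\<lambda>i. t powr \<alpha> * lam i powr (- \<alpha>)) ** transpose Q"
    by (simp add: Q(3) scaleR_conjugated_diagm)
  ultimately show ?thesis using that Q(1) by (simp add: A_def)
qed

section \<open>Distribution functions of log-concave densities\<close>

lemma cdf_of_has_integral:
  assumes "\<psi> absolutely_integrable_on UNIV"
  shows "(\<psi> has_integral cdf_of \<psi> x) {..x}"
proof -
  have "\<psi> absolutely_integrable_on {..x}"
    using assms by (rule set_integrable_subset) auto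
  then show ?thesis
    unfolding cdf_of_def by (intro integrable_integral set_lebesgue_integral_eq_integral(1))
qed

lemma cdf_of_le:
  assumes "\<And>x. \<psi> x \<ge> 0" and "(\<psi> has_integral I) UNIV"
  shows "cdf_of \<psi> x \<le> I"
proof -
  have "\<psi> absolutely_integrable_on UNIV"
    using assms by (intro nonnegative_absolutely_integrable_1) (auto simp: has_integral_integrable)
  then have "integral {..x} \<psi> \<le> integral UNIV \<psi>"
    using assms cdf_of_has_integral by (intro integral_subset_le) blast+
  then show ?thesis using assms(2) unfolding cdf_of_def by (simp add: integral_unique)
qed

lemma cdf_of_add_integral:
  assumes "\<psi> absolutely_integrable_on UNIV" "continuous_on {a..b} \<psi>" "a \<le> b"
  shows "cdf_of \<psi> b = cdf_of \<psi> a + integral {a..b} \<psi>"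
proof -
  have "(\<psi> has_integral (cdf_of \<psi> a + integral {a..b} \<psi>)) ({..a} \<union> {a..b})"
  proof (rule has_integral_Un[OF cdf_of_has_integral[OF assms(1)]])
    show "(\<psi> has_integral integral {a..b} \<psi>) {a..b}"
      using assms(2) by (intro integrable_integral integrable_continuous_real)
    have "{..a} \<inter> {a..b} = {a}" using assms(3) by auto
    then show "negligible ({..a} \<inter> {a..b})" by simp
  qed
  moreover have "{..a} \<union> {a..b} = {..b}" using assms(3) by auto
  ultimately show ?thesis using cdf_of_has_integral[OF assms(1), of b] by (metis has_integral_unique)
qed

lemma cdf_of_pos:
  assumes "\<psi> absolutely_integrable_on UNIV" "continuous_on UNIV \<psi>"
    and "\<And>x. \<psi> x > 0"
  shows "cdf_of \<psi> x > 0"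
proof -
  have cont: "continuous_on {x - 1..x} \<psi>" using assms(2) continuous_on_subset by blast
  obtain t0 where t0: "t0 \<in> {x - 1..x}" "\<And>t. t \<in> {x - 1..x} \<Longrightarrow> \<psi> t0 \<le> \<psi> t"
    using continuous_attains_inf[OF compact_Icc _ cont] by auto
  have "0 < integral {x - 1..x} (\<lambda>t. \<psi> t0)" using assms(3) by simp
  also have "\<dots> \<le> integral {x - 1..x} \<psi>"
    using t0 cont by (intro integral_le integrable_continuous_real) auto
  also have "\<dots> \<le> cdf_of \<psi> (x - 1) + integral {x - 1..x} \<psi>"
  proof -
    have "0 \<le> cdf_of \<psi> (x - 1)"
      by (rule has_integral_nonneg[OF cdf_of_has_integral[OF assms(1)]]) (simp add: assms(3) less_imp_le)
    then show ?thesis by simp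
  qed
  also have "\<dots> = cdf_of \<psi> x"
    using cdf_of_add_integral[OF assms(1) cont] by simp
  finally show ?thesis .
qed

lemma cdf_of_has_real_derivative:
  assumes "\<psi> absolutely_integrable_on UNIV" "continuous_on UNIV \<psi>"
  shows "(cdf_of \<psi> has_real_derivative \<psi> x) (at x)"
proof -
  have cont: "continuous_on {x - 1..x + 1} \<psi>" using assms(2) continuous_on_subset by blast
  have "((\<lambda>u. integral {x - 1..u} \<psi>) has_real_derivative \<psi> x) (at x within {x - 1..x + 1})"
    using cont by (intro integral_has_real_derivative) auto
  then have "((\<lambda>u. integral {x - 1..u} \<psi>) has_real_derivative \<psi> x) (at x)"
    by (simp add: at_within_Icc_at)
  then have "((\<lambda>u. cdf_of \<psi> (x - 1) + integral {x - 1..u} \<psi>) has_real_derivative \<psi> x) (at x)"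
    by (auto intro!: derivative_eq_intros)
  then show ?thesis
  proof (rule has_field_derivative_transform_within_open[where S = "{x - 1<..<x + 1}"])
    show "cdf_of \<psi> (x - 1) + integral {x - 1..u} \<psi> = cdf_of \<psi> u" if "u \<in> {x - 1<..<x + 1}" for u
      using that by (intro cdf_of_add_integral[symmetric] assms(1) continuous_on_subset[OF assms(2)]) auto
  qed auto
qed

lemma cdf_of_shift:
  assumes "\<psi> absolutely_integrable_on UNIV"
  shows "((\<lambda>t. \<psi> (t + h)) has_integral cdf_of \<psi> (x + h)) {..x}"
proof -
  define g where "g = (\<lambda>t. indicator {..x + h} t *\<^sub>R \<psi> t)"
  have g: "integrable lebesgue g"
    using set_integrable_subset[OF assms, of "{..x + h}"] unfolding g_def set_integrable_def by simp
  have "(\<lambda>s. g (h + 1 * s)) = (\<lambda>s. if s \<in> {..x} then \<psi> (s + h) else 0)"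
    by (auto simp: g_def fun_eq_iff indicator_def add.commute)
  moreover have "integrable lebesgue (\<lambda>s. g (h + 1 * s))"
    using lebesgue_integrable_real_affine[OF g, of 1 h] by simp
  moreover have "integral\<^sup>L lebesgue (\<lambda>s. g (h + 1 * s)) = integral\<^sup>L lebesgue g"
    using lebesgue_integral_real_affine[of 1 g h] by simp
  moreover have "integral\<^sup>L lebesgue g = cdf_of \<psi> (x + h)"
    using has_integral_integral_lebesgue[OF g] cdf_of_has_integral[OF assms, of "x + h"]
    unfolding g_def indicator_scaleR_eq_if has_integral_restrict_UNIV by (metis has_integral_unique)
  ultimately have "((\<lambda>s. if s \<in> {..x} then \<psi> (s + h) else 0) has_integral cdf_of \<psi> (x + h)) UNIV"
    using has_integral_integral_lebesgue by metis
  then show ?thesis using has_integral_restrict_UNIV by blast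
qed

lemma strictly_concave_imp_concave_on: "strictly_concave f \<Longrightarrow> concave_on UNIV f"
  unfolding strictly_concave_def
  by (intro concave_on_linorderI) (auto simp: less_imp_le)

lemma concave_on_four_points:
  fixes g :: "real \<Rightarrow> real"
  assumes "concave_on UNIV g" "a \<le> b" "b \<le> d" "a + d = b + c"
  shows "g a + g d \<le> g b + g c"
proof (cases "a = d")
  case False
  define s where "s = (b - a) / (d - a)"
  have "a < d" using False assms by simp
  then have s: "0 \<le> s" "s \<le> 1" "s * (d - a) = b - a"
    using assms by (auto simp: s_def field_simps)
  then have bc: "b = (1 - s) * a + s * d" "c = s * a + (1 - s) * d"
    using assms(4) by (simp_all add: algebra_simps)
  have "(1 - s) * g a + s * g d \<le> g b" "s * g a + (1 - s) * g d \<le> g c"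
    unfolding bc using concave_onD[OF assms(1), of s a d] concave_onD[OF assms(1), of "1 - s" a d] s
    by auto
  then show ?thesis by (simp add: algebra_simps)
qed (use assms in auto)

lemma cdf_of_density_ratio_mono:
  assumes int: "\<psi> absolutely_integrable_on UNIV" and pos: "\<And>x. \<psi> x > 0"
    and logconc: "concave_on UNIV (\<lambda>x. ln (\<psi> x))" and "x \<le> x'"
  shows "cdf_of \<psi> x * \<psi> x' \<le> cdf_of \<psi> x' * \<psi> x"
proof -
  define h where "h = x' - x"
  have "((\<lambda>t. \<psi> t * \<psi> x') has_integral cdf_of \<psi> x * \<psi> x') {..x}"
    by (intro has_integral_mult_left cdf_of_has_integral int)
  moreover have "((\<lambda>t. \<psi> (t + h) * \<psi> x) has_integral cdf_of \<psi> (x + h) * \<psi> x) {..x}"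
    by (intro has_integral_mult_left cdf_of_shift int)
  moreover have "\<psi> t * \<psi> x' \<le> \<psi> (t + h) * \<psi> x" if "t \<in> {..x}" for t
  proof -
    have "ln (\<psi> t) + ln (\<psi> x') \<le> ln (\<psi> (t + h)) + ln (\<psi> x)"
      using that \<open>x \<le> x'\<close> by (intro concave_on_four_points[OF logconc]) (auto simp: h_def)
    then have "ln (\<psi> t * \<psi> x') \<le> ln (\<psi> (t + h) * \<psi> x)"
      using pos[of t] pos[of x'] pos[of "t + h"] pos[of x] by (simp add: ln_mult)
    then show ?thesis using pos by simp
  qed
  ultimately have "cdf_of \<psi> x * \<psi> x' \<le> cdf_of \<psi> (x + h) * \<psi> x"
    by (rule has_integral_le)
  then show ?thesis by (simp add: h_def)
qed

lemma convex_on_neg_ln_cdf_of: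
  assumes int: "\<psi> absolutely_integrable_on UNIV" and cont: "continuous_on UNIV \<psi>"
    and pos: "\<And>x. \<psi> x > 0" and logconc: "concave_on UNIV (\<lambda>x. ln (\<psi> x))"
  shows "convex_on UNIV (\<lambda>x. - ln (cdf_of \<psi> x))"
proof (rule convex_on_realI)
  fix x :: real
  show "((\<lambda>x. - ln (cdf_of \<psi> x)) has_real_derivative - (\<psi> x / cdf_of \<psi> x)) (at x)"
    using cdf_of_pos[OF int cont pos, of x]
    by (auto intro!: derivative_eq_intros cdf_of_has_real_derivative[OF int cont] simp: field_simps)
next
  fix x y :: real
  assume "x \<le> y"
  then have "cdf_of \<psi> x * \<psi> y \<le> cdf_of \<psi> y * \<psi> x"
    by (rule cdf_of_density_ratio_mono[OF int pos logconc])
  then show "- (\<psi> x / cdf_of \<psi> x) \<le> - (\<psi> y / cdf_of \<psi> y)"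
    using cdf_of_pos[OF int cont pos] by (simp add: divide_simps mult.commute)
qed simp

section \<open>Minimisers of quadratic objectives\<close>

lemma symmetric_quadratic_form_midpoint:
  fixes B :: "real^'n^'n"
  assumes "transpose B = B"
  shows "((1/2) *\<^sub>R (a + b)) \<bullet> (B *v ((1/2) *\<^sub>R (a + b)))
    = (a \<bullet> (B *v a) + b \<bullet> (B *v b)) / 2 - (a - b) \<bullet> (B *v (a - b)) / 4"
  using symmetric_matrix_inner_commute[OF assms, of a b]
  by (simp add: matrix_vector_mult_scaleR matrix_vector_right_distrib matrix_vector_mult_diff_distrib
      inner_add_left inner_add_right inner_diff_left inner_diff_right algebra_simps) (simp add: field_simps)

lemma convex_on_sum_coordinates:
  assumes "convex_on UNIV \<phi>"
  shows "convex_on UNIV (\<lambda>u::real^'n. \<Sum>j\<in>Z. \<phi> (u $ j * y j))"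
proof (rule convex_onI)
  fix t :: real and u v :: "real^'n"
  assume "0 < t" "t < 1"
  then have "\<phi> (((1 - t) *\<^sub>R u + t *\<^sub>R v) $ j * y j) \<le> (1 - t) * \<phi> (u $ j * y j) + t * \<phi> (v $ j * y j)"
    for j
    using convex_onD[OF assms, of t "u $ j * y j" "v $ j * y j"] by (simp add: algebra_simps)
  then show "(\<Sum>j\<in>Z. \<phi> (((1 - t) *\<^sub>R u + t *\<^sub>R v) $ j * y j))
      \<le> (1 - t) * (\<Sum>j\<in>Z. \<phi> (u $ j * y j)) + t * (\<Sum>j\<in>Z. \<phi> (v $ j * y j))"
    by (simp add: sum_distrib_left sum.distrib[symmetric] sum_mono)
qed simp

lemma continuous_coercive_attains_min:
  fixes J :: "'a::euclidean_space \<Rightarrow> real"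
  assumes cont: "continuous_on UNIV J" and coercive: "\<And>v. m * (v \<bullet> v) + c \<le> J v" and "m > 0"
  obtains u where "\<And>v. J u \<le> J v"
proof -
  define R where "R = sqrt (\<bar>J 0 - c\<bar> / m)"
  have "R \<ge> 0" using \<open>m > 0\<close> by (simp add: R_def)
  obtain u where u: "\<forall>v\<in>cball 0 R. J u \<le> J v"
    using continuous_attains_inf[OF compact_cball, of 0 R J] \<open>R \<ge> 0\<close>
      continuous_on_subset[OF cont] by auto
  have "J u \<le> J v" for v
  proof (cases "v \<in> cball 0 R")
    case False
    then have "R^2 < (norm v)^2" using \<open>R \<ge> 0\<close> by (intro power_strict_mono) auto
    then have "J 0 - c < m * (v \<bullet> v)"
      using \<open>m > 0\<close> abs_ge_self[of "J 0 - c"] by (simp add: R_def power2_norm_eq_inner field_simps)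
    then have "J 0 < J v" using coercive[of v] by simp
    moreover have "J u \<le> J 0" using u \<open>R \<ge> 0\<close> by simp
    ultimately show ?thesis by simp
  qed (use u in simp)
  with that show ?thesis by blast
qed

lemma coercive_quadratic_plus_convex_unique_minimizer:
  fixes B :: "real^'n^'n"
  assumes sym: "transpose B = B" and coercive: "\<And>x. m * (x \<bullet> x) \<le> x \<bullet> (B *v x)" and "m > 0"
    and g: "convex_on UNIV g" "continuous_on UNIV g" "\<And>u. c \<le> g u"
    and J: "J = (\<lambda>u. (1/2) * (u \<bullet> (B *v u)) + g u)"
  shows "\<exists>!u. \<forall>v. J u \<le> J v"
proof -
  have "continuous_on UNIV J"
    unfolding J by (intro continuous_intros continuous_on_quadratic_form g)
  moreover have "(m / 2) * (v \<bullet> v) + c \<le> J v" for v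
    using coercive[of v] g(3)[of v] by (simp add: J)
  ultimately obtain u where u: "\<forall>v. J u \<le> J v"
    using continuous_coercive_attains_min[of J "m / 2" c] \<open>m > 0\<close> by auto
  moreover have "u' = u" if u': "\<forall>v. J u' \<le> J v" for u'
  proof (rule ccontr)
    assume "u' \<noteq> u"
    then have "0 < (u - u') \<bullet> (B *v (u - u'))"
      using coercive[of "u - u'"] \<open>m > 0\<close> by (smt (verit) inner_gt_zero_iff mult_pos_pos right_minus_eq)
    moreover have "g ((1/2) *\<^sub>R (u + u')) \<le> (g u + g u') / 2"
      using convex_onD[OF g(1), of "1/2" u u'] by (simp add: scaleR_add_right)
    ultimately have "J ((1/2) *\<^sub>R (u + u')) < (J u + J u') / 2"
      unfolding J symmetric_quadratic_form_midpoint[OF sym] by argo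
    then show False
      using u[rule_format, of "(1/2) *\<^sub>R (u + u')"] u'[rule_format, of "(1/2) *\<^sub>R (u + u')"] by argo
  qed
  ultimately show ?thesis by blast
qed

lemma quadratic_minus_separable_minimizer_gradient:
  fixes B :: "real^'n^'n"
  assumes sym: "transpose B = B"
    and deriv: "\<And>j s. (h j has_real_derivative h' j s) (at s)"
    and min: "\<And>v. (1/2) * (u \<bullet> (B *v u)) - (\<Sum>j\<in>Z. h j (u $ j))
                   \<le> (1/2) * (v \<bullet> (B *v v)) - (\<Sum>j\<in>Z. h j (v $ j))"
  shows "B *v u = (\<Sum>j\<in>Z. h' j (u $ j) *\<^sub>R axis j 1)"
proof -
  have "(B *v u) $ k = (\<Sum>j\<in>Z. h' j (u $ j) *\<^sub>R axis j 1) $ k" for k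
  proof -
    define e :: "real^'n" where "e = axis k 1"
    define f where "f t = (1/2) * ((u + t *\<^sub>R e) \<bullet> (B *v (u + t *\<^sub>R e)))
      - (\<Sum>j\<in>Z. h j (u $ j + t * e $ j))" for t
    have "f = (\<lambda>t. (1/2) * (u \<bullet> (B *v u)) + t * (e \<bullet> (B *v u)) + (t^2 / 2) * (e \<bullet> (B *v e))
      - (\<Sum>j\<in>Z. h j (u $ j + t * e $ j)))"
      using symmetric_matrix_inner_commute[OF sym, of u e]
      by (simp add: fun_eq_iff f_def matrix_vector_right_distrib matrix_vector_mult_scaleR inner_add_left
          inner_add_right power2_eq_square algebra_simps)
    then have "(f has_real_derivative e \<bullet> (B *v u) - (\<Sum>j\<in>Z. h' j (u $ j) * e $ j)) (at 0)"
      by (auto intro!: derivative_eq_intros DERIV_chain2[OF deriv])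
    moreover have "f 0 \<le> f t" for t
      using min[of "u + t *\<^sub>R e"] by (simp add: f_def)
    ultimately have "e \<bullet> (B *v u) - (\<Sum>j\<in>Z. h' j (u $ j) * e $ j) = 0"
      by (intro DERIV_local_min[of f _ 0 1]) auto
    moreover have "(\<Sum>j\<in>Z. h' j (u $ j) * e $ j) = (\<Sum>j\<in>Z. h' j (u $ j) *\<^sub>R axis j 1) $ k"
      by (simp add: e_def sum_component axis_def eq_commute)
    ultimately show ?thesis by (simp add: e_def inner_axis')
  qed
  then show ?thesis by (simp add: vec_eq_iff)
qed

section \<open>The probit objective\<close>

lemma sum_axis_nth: "(\<Sum>j\<in>Z. a j *\<^sub>R axis j (1::real)) $ k = (if k \<in> Z then a k else 0)"
  by (simp add: sum_component axis_def if_distrib[of "\<lambda>x. _ * x"] cong: if_cong)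

lemma sum_axis_eq_iff:
  "(\<Sum>j\<in>Z. a j *\<^sub>R axis j (1::real)) = (\<Sum>j\<in>Z. b j *\<^sub>R axis j 1) \<longleftrightarrow> (\<forall>j\<in>Z. a j = b j)"
proof
  assume "(\<Sum>j\<in>Z. a j *\<^sub>R axis j (1::real)) = (\<Sum>j\<in>Z. b j *\<^sub>R axis j 1)"
  then show "\<forall>j\<in>Z. a j = b j" by (metis sum_axis_nth)
qed (auto intro: sum.cong)

lemma matrix_vector_mult_sum_axis:
  fixes C :: "real^'n^'m"
  shows "C *v (\<Sum>j\<in>Z. a j *\<^sub>R axis j 1) = (\<Sum>j\<in>Z. a j *\<^sub>R (C *v axis j 1))"
  by (simp add: matrix_vector_mult_scaleR vec.sum)

lemma sum_matrix_columns_nth: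
  fixes C :: "real^'n^'m"
  shows "(\<Sum>j\<in>Z. a j *\<^sub>R (C *v axis j 1)) $ i = (\<Sum>k\<in>Z. a k * C $ i $ k)"
  by (simp add: sum_component matrix_vector_mult_basis column_def)

lemma column_combination_eq_iff:
  fixes C Ci :: "real^'n^'n"
  assumes "Ci ** C = mat 1"
  shows "(let u = (\<Sum>j\<in>Z. a j *\<^sub>R (C *v axis j 1)) in Ci *v u = (\<Sum>j\<in>Z. G j (u $ j) *\<^sub>R axis j 1))
    \<longleftrightarrow> (\<forall>j\<in>Z. a j = G j (\<Sum>k\<in>Z. a k * C $ j $ k))"
proof -
  have "Ci *v (\<Sum>j\<in>Z. a j *\<^sub>R (C *v axis j 1)) = (\<Sum>j\<in>Z. a j *\<^sub>R axis j 1)"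
    using assms by (simp add: matrix_vector_mult_sum_axis[symmetric] matrix_vector_mul_assoc)
  then show ?thesis by (simp only: Let_def sum_matrix_columns_nth sum_axis_eq_iff)
qed

lemma probit_objective_minimizer:
  fixes Q :: "real^'n^'n" and \<Psi> \<psi> :: "real \<Rightarrow> real"
  assumes Q: "orthogonal_matrix Q" and mu: "\<forall>i. mu i > 0" and C: "C = Q ** diagm mu ** transpose Q"
    and \<Psi>_pos: "\<And>x. \<Psi> x > 0" and \<Psi>_le_1: "\<And>x. \<Psi> x \<le> 1"
    and \<Psi>_deriv: "\<And>x. (\<Psi> has_real_derivative \<psi> x) (at x)"
    and \<Psi>_convex: "convex_on UNIV (\<lambda>x. - ln (\<Psi> x))"
  shows "let Ci = matrix_inv C;
         J = (\<lambda>u::real^'n. (1/2) * (u \<bullet> (Ci *v u)) - (\<Sum>j\<in>Z'. ln (\<Psi> (u $ j * y j))));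
         F = (\<lambda>j s. y j * \<psi> (s * y j) / \<Psi> (s * y j));
         e = (\<lambda>j::'n. axis j (1::real));
         c = (\<lambda>j. C *v e j);
         ismin = (\<lambda>u. \<forall>v. J u \<le> J v)
     in (\<exists>!u. ismin u)
        \<and> (\<forall>u. ismin u \<longrightarrow> Ci *v u = (\<Sum>j\<in>Z'. F j (u $ j) *\<^sub>R e j))
        \<and> (\<forall>u. ismin u \<longrightarrow> (\<exists>a. u = (\<Sum>j\<in>Z'. a j *\<^sub>R c j)))
        \<and> (\<forall>a. (let u = (\<Sum>j\<in>Z'. a j *\<^sub>R c j) in
                 Ci *v u = (\<Sum>j\<in>Z'. F j (u $ j) *\<^sub>R e j))
               \<longleftrightarrow> (\<forall>j\<in>Z'. a j = F j (\<Sum>k\<in>Z'. a k * C $ j $ k)))"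
proof -
  define Ci where "Ci = matrix_inv C"
  have CCi: "C ** Ci = mat 1" and CiC: "Ci ** C = mat 1" and Ci_sym: "transpose Ci = Ci"
    and "\<exists>m>0. \<forall>x. m * (x \<bullet> x) \<le> x \<bullet> (Ci *v x)"
    using matrix_inv_positive_orthogonal_diagonalization[OF Q mu] by (simp_all add: Ci_def C)
  then obtain m where "m > 0" and Ci_coercive: "\<forall>x. m * (x \<bullet> x) \<le> x \<bullet> (Ci *v x)" by blast
  have unique: "\<exists>!u. \<forall>v. (1/2) * (u \<bullet> (Ci *v u)) - (\<Sum>j\<in>Z'. ln (\<Psi> (u $ j * y j)))
                 \<le> (1/2) * (v \<bullet> (Ci *v v)) - (\<Sum>j\<in>Z'. ln (\<Psi> (v $ j * y j)))"
  proof (rule coercive_quadratic_plus_convex_unique_minimizer[OF Ci_sym Ci_coercive[rule_format] \<open>m > 0\<close>])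
    show "convex_on UNIV (\<lambda>u. \<Sum>j\<in>Z'. - ln (\<Psi> (u $ j * y j)))"
      by (rule convex_on_sum_coordinates[OF \<Psi>_convex])
    have "continuous_on UNIV \<Psi>"
      using \<Psi>_deriv by (intro continuous_at_imp_continuous_on) (auto intro: DERIV_isCont)
    then have "continuous_on UNIV (\<lambda>u::real^'n. \<Psi> (u $ j * y j))" for j
      by (rule continuous_on_compose2) (auto intro!: continuous_intros)
    then show "continuous_on UNIV (\<lambda>u. \<Sum>j\<in>Z'. - ln (\<Psi> (u $ j * y j)))"
      using \<Psi>_pos by (intro continuous_intros) (auto simp: less_imp_neq[OF \<Psi>_pos, symmetric])
    show "0 \<le> (\<Sum>j\<in>Z'. - ln (\<Psi> (u $ j * y j)))" for u :: "real^'n"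
      using \<Psi>_pos \<Psi>_le_1 by (intro sum_nonneg) simp
  qed (simp add: fun_eq_iff sum_negf)
  have gradient: "Ci *v u = (\<Sum>j\<in>Z'. (y j * \<psi> (u $ j * y j) / \<Psi> (u $ j * y j)) *\<^sub>R axis j 1)"
    if "\<forall>v. (1/2) * (u \<bullet> (Ci *v u)) - (\<Sum>j\<in>Z'. ln (\<Psi> (u $ j * y j)))
             \<le> (1/2) * (v \<bullet> (Ci *v v)) - (\<Sum>j\<in>Z'. ln (\<Psi> (v $ j * y j)))" for u
  proof (rule quadratic_minus_separable_minimizer_gradient[OF Ci_sym])
    show "((\<lambda>s. ln (\<Psi> (s * y j))) has_real_derivative y j * \<psi> (s * y j) / \<Psi> (s * y j)) (at s)" for j s
      using \<Psi>_pos[of "s * y j"]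
      by (auto intro!: derivative_eq_intros DERIV_chain2[OF \<Psi>_deriv] simp: field_simps)
  qed (use that in blast)
  have representation: "\<exists>a. u = (\<Sum>j\<in>Z'. a j *\<^sub>R (C *v axis j 1))"
    if "\<forall>v. (1/2) * (u \<bullet> (Ci *v u)) - (\<Sum>j\<in>Z'. ln (\<Psi> (u $ j * y j)))
             \<le> (1/2) * (v \<bullet> (Ci *v v)) - (\<Sum>j\<in>Z'. ln (\<Psi> (v $ j * y j)))" for u
  proof
    have "u = C *v (Ci *v u)" using CCi by (simp add: matrix_vector_mul_assoc)
    then show "u = (\<Sum>j\<in>Z'. (y j * \<psi> (u $ j * y j) / \<Psi> (u $ j * y j)) *\<^sub>R (C *v axis j 1))"
      by (simp add: gradient[OF that] matrix_vector_mult_sum_axis)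
  qed
  show ?thesis
    unfolding Let_def Ci_def[symmetric]
    by (intro conjI allI impI unique gradient representation
        column_combination_eq_iff[OF CiC, unfolded Let_def]) blast+
qed

theorem proposition2p4:
  fixes W :: "real^'n^'n" and p \<tau> \<alpha> :: real
    and Z' :: "'n set" and y :: "'n \<Rightarrow> real" and \<psi> :: "real \<Rightarrow> real"
  assumes W_sym: "transpose W = W"
    and W_nonneg: "\<forall>i j. W $ i $ j \<ge> 0"
    and deg_pos: "\<forall>i. (\<Sum>j\<in>UNIV. W $ i $ j) > 0"
    and tau_pos: "\<tau>^2 > 0" and alpha_pos: "\<alpha> > 0"
    and y_sign: "\<forall>j\<in>Z'. y j = 1 \<or> y j = -1"
    and psi_nonneg: "\<forall>x. \<psi> x \<ge> 0"
    and psi_density: "(\<psi> has_integral 1) UNIV"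
    and psi_C1: "\<psi> C1_differentiable_on UNIV"
    and psi_symm: "\<forall>x. \<psi> (- x) = \<psi> x"
    and psi_full_support: "\<forall>x. \<psi> x > 0"
    and psi_logconc: "strictly_concave (\<lambda>x. ln (\<psi> x))"
  shows
    "let d = (\<lambda>i. \<Sum>j\<in>UNIV. W $ i $ j);
         Dp = diagm (\<lambda>i. d i powr (- p));
         L = Dp ** (diagm d - W) ** Dp;
         C = (\<tau>^2) powr \<alpha> *\<^sub>R mat_rpow (L + (\<tau>^2) *\<^sub>R mat 1) (- \<alpha>);
         Ci = matrix_inv C;
         \<Psi> = cdf_of \<psi>;
         J = (\<lambda>u::real^'n. (1/2) * (u \<bullet> (Ci *v u))
                 - (\<Sum>j\<in>Z'. ln (\<Psi> (u $ j * y j))));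
         F = (\<lambda>j s. y j * \<psi> (s * y j) / \<Psi> (s * y j));
         e = (\<lambda>j::'n. axis j (1::real));
         c = (\<lambda>j. C *v e j);
         ismin = (\<lambda>u. \<forall>v. J u \<le> J v)
     in (\<exists>!u. ismin u)
        \<and> (\<forall>u. ismin u \<longrightarrow> Ci *v u = (\<Sum>j\<in>Z'. F j (u $ j) *\<^sub>R e j))
        \<and> (\<forall>u. ismin u \<longrightarrow> (\<exists>a. u = (\<Sum>j\<in>Z'. a j *\<^sub>R c j)))
        \<and> (\<forall>a. (let u = (\<Sum>j\<in>Z'. a j *\<^sub>R c j) in
                 Ci *v u = (\<Sum>j\<in>Z'. F j (u $ j) *\<^sub>R e j))
               \<longleftrightarrow> (\<forall>j\<in>Z'. a j = F j (\<Sum>k\<in>Z'. a k * C $ j $ k)))"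
proof -
  obtain Q mu where Q: "orthogonal_matrix Q" and mu: "\<forall>i. 0 < mu i"
    and C: "(\<tau>^2) powr \<alpha> *\<^sub>R mat_rpow (diagm (\<lambda>i. (\<Sum>j\<in>UNIV. W $ i $ j) powr (- p))
        ** (diagm (\<lambda>i. \<Sum>j\<in>UNIV. W $ i $ j) - W) ** diagm (\<lambda>i. (\<Sum>j\<in>UNIV. W $ i $ j) powr (- p))
        + (\<tau>^2) *\<^sub>R mat 1) (- \<alpha>) = Q ** diagm mu ** transpose Q"
    using scaled_mat_rpow_shifted_graph_laplacian[OF W_sym W_nonneg tau_pos] .
  have \<psi>_int: "\<psi> absolutely_integrable_on UNIV"
    using psi_density psi_nonneg by (intro nonnegative_absolutely_integrable_1) (auto simp: has_integral_integrable)
  have \<psi>_cont: "continuous_on UNIV \<psi>"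
    using psi_C1 by (rule C1_differentiable_imp_continuous_on)
  have \<psi>_logconc: "concave_on UNIV (\<lambda>x. ln (\<psi> x))"
    using psi_logconc by (rule strictly_concave_imp_concave_on)
  have \<psi>_pos: "\<And>x. \<psi> x > 0" using psi_full_support by blast
  from probit_objective_minimizer[OF Q mu C cdf_of_pos[OF \<psi>_int \<psi>_cont \<psi>_pos]
      cdf_of_le[OF psi_nonneg[rule_format] psi_density] cdf_of_has_real_derivative[OF \<psi>_int \<psi>_cont]
      convex_on_neg_ln_cdf_of[OF \<psi>_int \<psi>_cont \<psi>_pos \<psi>_logconc]]
  show ?thesis unfolding Let_def .
qed

end
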